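(* Let $K$ be a finite simplicial complex with a hereditary ordering $\succ$. If $\sigma\in M(K)$, then $\mu(\lambda(\sigma))=\sigma$ and $\lambda(\sigma)\notin M(K)$.
   Context: A finite simplicial complex $K$ is a family of subsets of a finite vertex set containing $\emptyset$ and closed under subsets; $\dim\sigma=|\sigma|-1$; a facet is a face of codimension one. Given a strict total ordering $\succ$ of $K$, for non-empty $\sigma$ let $\mu(\sigma)$ be the $\succ$-largest facet of $\sigma$. $\succ$ is hereditary if $\sigma\succ\tau$ whenever $\dim\sigma>\dim\tau$, and $\sigma\succ\tau$ whenever $\mu(\sigma)\succ\mu(\tau)$. $M(K)$ is the set of simplices $\sigma\in K$ such that $\sigma=\mu(\eta)$ for some $\eta\in K$. For a simplex $\sigma\in K$ of dimension $k$ that is not maximal with respect to inclusion, $\lambda(\sigma)$ denotes the $\succ$-smallest $(k+1)$-dimensional simplex of $K$ containing $\sigma$ (elements of $M(K)$ are not maximal, so $\lambda$ is defined on them). *)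

theory Defs
  imports Main
begin

text \<open>A finite simplicial complex: a family of subsets of a finite vertex set,
containing the empty set and closed under subsets.  dim s = card s - 1.\<close>
definition simplicial_complex :: "'v set set \<Rightarrow> bool" where
  "simplicial_complex K \<longleftrightarrow> finite (\<Union>K) \<and> {} \<in> K \<and> (\<forall>s\<in>K. \<forall>t. t \<subseteq> s \<longrightarrow> t \<in> K)"

text \<open>gt s t means s \<succ> t; a strict total ordering of K.\<close>
definition strict_total_order_on :: "'v set set \<Rightarrow> ('v set \<Rightarrow> 'v set \<Rightarrow> bool) \<Rightarrow> bool" where
  "strict_total_order_on K gt \<longleftrightarrow>
     (\<forall>s\<in>K. \<not> gt s s) \<and>
     (\<forall>s\<in>K. \<forall>t\<in>K. \<forall>u\<in>K. gt s t \<longrightarrow> gt t u \<longrightarrow> gt s u) \<and>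
     (\<forall>s\<in>K. \<forall>t\<in>K. s \<noteq> t \<longrightarrow> gt s t \<or> gt t s)"

definition facet :: "'v set \<Rightarrow> 'v set \<Rightarrow> bool" where
  "facet t s \<longleftrightarrow> t \<subseteq> s \<and> card t + 1 = card s"

definition mu :: "('v set \<Rightarrow> 'v set \<Rightarrow> bool) \<Rightarrow> 'v set \<Rightarrow> 'v set" where
  "mu gt s = (THE t. facet t s \<and> (\<forall>t'. facet t' s \<and> t' \<noteq> t \<longrightarrow> gt t t'))"

definition hereditary :: "'v set set \<Rightarrow> ('v set \<Rightarrow> 'v set \<Rightarrow> bool) \<Rightarrow> bool" where
  "hereditary K gt \<longleftrightarrow> strict_total_order_on K gt \<and>
     (\<forall>s\<in>K. \<forall>t\<in>K. card s > card t \<longrightarrow> gt s t) \<and>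
     (\<forall>s\<in>K. \<forall>t\<in>K. s \<noteq> {} \<longrightarrow> t \<noteq> {} \<longrightarrow> gt (mu gt s) (mu gt t) \<longrightarrow> gt s t)"

definition MK :: "'v set set \<Rightarrow> ('v set \<Rightarrow> 'v set \<Rightarrow> bool) \<Rightarrow> 'v set set" where
  "MK K gt = {s. \<exists>eta\<in>K. eta \<noteq> {} \<and> s = mu gt eta}"

definition lam :: "'v set set \<Rightarrow> ('v set \<Rightarrow> 'v set \<Rightarrow> bool) \<Rightarrow> 'v set \<Rightarrow> 'v set" where
  "lam K gt s = (THE e. e \<in> K \<and> s \<subseteq> e \<and> card e = card s + 1 \<and>
      (\<forall>e'. e' \<in> K \<and> s \<subseteq> e' \<and> card e' = card s + 1 \<and> e' \<noteq> e \<longrightarrow> gt e' e))"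

end

theory Submission
  imports Defs
begin

text \<open>Let \<open>\<sigma> = \<mu>(\<eta>)\<close> and \<open>L = \<lambda>(\<sigma>)\<close>; then \<open>\<eta>\<close> is one of the candidates for \<open>L\<close>, so
  \<open>\<eta> \<succeq> L\<close>.  If \<open>\<mu>(L) \<noteq> \<sigma>\<close>, then \<open>\<mu>(L) \<succ> \<sigma> = \<mu>(\<eta>)\<close>, and heredity gives \<open>L \<succ> \<eta>\<close>,
  a contradiction.  If \<open>L = \<mu>(\<xi>)\<close>, pick a vertex \<open>b \<in> \<xi> - L\<close>: then \<open>\<sigma> \<union> {b}\<close> is a facet
  of \<open>\<xi>\<close> other than \<open>L\<close>, hence \<open>L \<succ> \<sigma> \<union> {b}\<close>, but it is also a candidate for \<open>\<lambda>(\<sigma>)\<close>,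
  hence \<open>\<sigma> \<union> {b} \<succ> L\<close>.\<close>

lemma strict_total_order_on_converse:
  "strict_total_order_on K gt \<Longrightarrow> strict_total_order_on K (\<lambda>a b. gt b a)"
  unfolding strict_total_order_on_def by blast

lemma strict_total_order_on_asym:
  "\<lbrakk>strict_total_order_on K gt; s \<in> K; t \<in> K; gt s t; gt t s\<rbrakk> \<Longrightarrow> False"
  unfolding strict_total_order_on_def by blast

lemma strict_total_order_on_ex_greatest:
  assumes sto: "strict_total_order_on K gt" and "finite F" "F \<noteq> {}" "F \<subseteq> K"
  shows "\<exists>m\<in>F. \<forall>x\<in>F. x \<noteq> m \<longrightarrow> gt m x"
  using assms(2-4)
proof (induction F rule: finite_ne_induct)
  case (singleton x)
  then show ?case by auto
next
  case (insert x F)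
  then obtain m where m: "m \<in> F" "\<forall>y\<in>F. y \<noteq> m \<longrightarrow> gt m y" by auto
  have K: "x \<in> K" "m \<in> K" "F \<subseteq> K" using insert.prems m by auto
  show ?case
  proof (cases "gt x m")
    case True
    have "gt x y" if "y \<in> F" "y \<noteq> m" for y
    proof -
      have "gt m y" "y \<in> K" using m that K(3) by auto
      with True K(1,2) sto show ?thesis unfolding strict_total_order_on_def by blast
    qed
    with True show ?thesis by blast
  next
    case False
    moreover have "x \<noteq> m" using m(1) \<open>x \<notin> F\<close> by blast
    ultimately have "gt m x" using K(1,2) sto unfolding strict_total_order_on_def by blast
    then show ?thesis using m by auto
  qed
qed

lemma strict_total_order_on_the_greatest:
  assumes sto: "strict_total_order_on K gt"
    and fin: "finite {x. Q x}" and ne: "{x. Q x} \<noteq> {}" and sub: "{x. Q x} \<subseteq> K"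
  defines "m \<equiv> THE t. Q t \<and> (\<forall>t'. Q t' \<and> t' \<noteq> t \<longrightarrow> gt t t')"
  shows "Q m \<and> (\<forall>t'. Q t' \<and> t' \<noteq> m \<longrightarrow> gt m t')"
proof -
  obtain g where g: "Q g" "\<forall>t'. Q t' \<and> t' \<noteq> g \<longrightarrow> gt g t'"
    using strict_total_order_on_ex_greatest[OF sto fin ne sub] by auto
  have unique: "t = g" if t: "Q t" "\<forall>t'. Q t' \<and> t' \<noteq> t \<longrightarrow> gt t t'" for t
  proof (rule ccontr)
    assume "t \<noteq> g"
    then have "gt t g" "gt g t" using t g by auto
    moreover have "t \<in> K" "g \<in> K" using t(1) g(1) sub by auto
    ultimately show False using strict_total_order_on_asym[OF sto] by blast
  qed
  have "\<exists>!t. Q t \<and> (\<forall>t'. Q t' \<and> t' \<noteq> t \<longrightarrow> gt t t')"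
    using g unique by (intro ex1I[of _ g]) blast+
  then show ?thesis unfolding m_def by (rule theI')
qed

lemma simplicial_complex_finite: "simplicial_complex K \<Longrightarrow> finite K"
  unfolding simplicial_complex_def by (meson Sup_upper finite_UnionD)

lemma simplicial_complex_finite_simplex: "simplicial_complex K \<Longrightarrow> s \<in> K \<Longrightarrow> finite s"
  unfolding simplicial_complex_def by (meson Union_upper finite_subset)

lemma simplicial_complex_subset: "simplicial_complex K \<Longrightarrow> s \<in> K \<Longrightarrow> t \<subseteq> s \<Longrightarrow> t \<in> K"
  unfolding simplicial_complex_def by blast

lemma facet_insert: "finite s \<Longrightarrow> b \<notin> s \<Longrightarrow> facet s (insert b s)"
  unfolding facet_def by auto

lemma mu_greatest_facet:
  assumes sc: "simplicial_complex K" and sto: "strict_total_order_on K gt"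
    and eta: "eta \<in> K" "eta \<noteq> {}"
  shows "facet (mu gt eta) eta \<and> (\<forall>t'. facet t' eta \<and> t' \<noteq> mu gt eta \<longrightarrow> gt (mu gt eta) t')"
  unfolding mu_def
proof (rule strict_total_order_on_the_greatest[OF sto])
  have fin: "finite eta" using simplicial_complex_finite_simplex[OF sc eta(1)] .
  show "finite {t. facet t eta}"
    using fin by (rule finite_subset[rotated, OF finite_Pow_iff[THEN iffD2]]) (auto simp: facet_def)
  obtain x where "x \<in> eta" using eta(2) by auto
  then have "facet (eta - {x}) eta"
    using facet_insert[of "eta - {x}" x] fin by (simp add: insert_absorb)
  then show "{t. facet t eta} \<noteq> {}" by blast
  show "{t. facet t eta} \<subseteq> K"
    using simplicial_complex_subset[OF sc eta(1)] by (auto simp: facet_def)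
qed

lemma lam_least_coface:
  assumes sc: "simplicial_complex K" and sto: "strict_total_order_on K gt"
    and eta: "eta \<in> K" "facet s eta"
  shows "lam K gt s \<in> K" "facet s (lam K gt s)"
    and "\<And>e. e \<in> K \<Longrightarrow> facet s e \<Longrightarrow> e \<noteq> lam K gt s \<Longrightarrow> gt e (lam K gt s)"
proof -
  have "finite {e \<in> K. s \<subseteq> e \<and> card e = card s + 1}"
    using simplicial_complex_finite[OF sc] by simp
  moreover have "{e \<in> K. s \<subseteq> e \<and> card e = card s + 1} \<noteq> {}"
    using eta unfolding facet_def by auto
  ultimately have "lam K gt s \<in> K \<and> s \<subseteq> lam K gt s \<and> card (lam K gt s) = card s + 1 \<and>
     (\<forall>e. e \<in> K \<and> s \<subseteq> e \<and> card e = card s + 1 \<and> e \<noteq> lam K gt s \<longrightarrow> gt e (lam K gt s))"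
    using strict_total_order_on_the_greatest[OF strict_total_order_on_converse[OF sto],
        of "\<lambda>e. e \<in> K \<and> s \<subseteq> e \<and> card e = card s + 1"]
    unfolding lam_def by (simp only: conj_assoc mem_Collect_eq subset_iff) blast
  then show "lam K gt s \<in> K" "facet s (lam K gt s)"
    and "\<And>e. e \<in> K \<Longrightarrow> facet s e \<Longrightarrow> e \<noteq> lam K gt s \<Longrightarrow> gt e (lam K gt s)"
    unfolding facet_def by auto
qed

context
  fixes K :: "'v set set" and gt :: "'v set \<Rightarrow> 'v set \<Rightarrow> bool" and s eta :: "'v set"
  assumes sc: "simplicial_complex K" and sto: "strict_total_order_on K gt"
    and eta: "eta \<in> K" "eta \<noteq> {}" "s = mu gt eta"
begin

lemma facet_mu: "facet s eta"
  using mu_greatest_facet[OF sc sto eta(1,2)] eta(3) by simp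

lemmas lam_of_mu = lam_least_coface[OF sc sto eta(1) facet_mu]

lemma mu_lam_of_mu:
  assumes her: "hereditary K gt"
  shows "mu gt (lam K gt s) = s"
proof (rule ccontr)
  let ?L = "lam K gt s"
  assume ne: "mu gt ?L \<noteq> s"
  have L: "?L \<in> K" "?L \<noteq> {}" using lam_of_mu(1,2) by (auto simp: facet_def)
  have "gt (mu gt ?L) (mu gt eta)"
    using mu_greatest_facet[OF sc sto L] lam_of_mu(2) ne eta(3) by blast
  then have "gt ?L eta" using her L eta(1,2) unfolding hereditary_def by blast
  moreover have "eta \<noteq> ?L" using ne eta(3) by auto
  then have "gt eta ?L" using lam_of_mu(3) eta(1) facet_mu by blast
  ultimately show False using strict_total_order_on_asym[OF sto] L(1) eta(1) by blast
qed

lemma lam_of_mu_notin_MK: "lam K gt s \<notin> MK K gt"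
proof
  let ?L = "lam K gt s"
  assume "?L \<in> MK K gt"
  then obtain xi where xi: "xi \<in> K" "xi \<noteq> {}" "?L = mu gt xi" unfolding MK_def by auto
  have L_xi: "facet ?L xi" "\<And>t. facet t xi \<Longrightarrow> t \<noteq> ?L \<Longrightarrow> gt ?L t"
    using mu_greatest_facet[OF sc sto xi(1,2)] xi(3) by auto
  have s_L: "s \<subseteq> ?L" "card ?L = card s + 1" using lam_of_mu(2) by (auto simp: facet_def)
  have "?L \<subset> xi" using L_xi(1) unfolding facet_def by auto
  then obtain b where b: "b \<in> xi" "b \<notin> ?L" by blast
  define e where "e = insert b s"
  have fin_s: "finite s" using simplicial_complex_finite_simplex[OF sc] lam_of_mu(1) s_L(1)
    by (meson finite_subset)
  have "facet s e" using facet_insert[OF fin_s] b s_L(1) unfolding e_def by blast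
  have "e \<subseteq> xi" "e \<noteq> ?L" using b s_L(1) L_xi(1) unfolding e_def facet_def by auto
  then have "facet e xi"
    using \<open>facet s e\<close> s_L(2) L_xi(1) unfolding facet_def by simp
  then have "gt ?L e" using L_xi(2) \<open>e \<noteq> ?L\<close> by blast
  moreover have "e \<in> K" using simplicial_complex_subset[OF sc xi(1) \<open>e \<subseteq> xi\<close>] .
  then have "gt e ?L" using lam_of_mu(3) \<open>facet s e\<close> \<open>e \<noteq> ?L\<close> by blast
  ultimately show False using strict_total_order_on_asym[OF sto] lam_of_mu(1) \<open>e \<in> K\<close> by blast
qed

end

theorem lemma5:
  fixes K :: "'v set set" and gt :: "'v set \<Rightarrow> 'v set \<Rightarrow> bool"
  assumes "simplicial_complex K"
    and "hereditary K gt"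
    and "s \<in> MK K gt"
  shows "mu gt (lam K gt s) = s \<and> lam K gt s \<notin> MK K gt"
proof -
  have sto: "strict_total_order_on K gt" using assms(2) unfolding hereditary_def by blast
  obtain eta where "eta \<in> K" "eta \<noteq> {}" "s = mu gt eta" using assms(3) unfolding MK_def by auto
  then show ?thesis
    using mu_lam_of_mu[OF assms(1) sto] lam_of_mu_notin_MK[OF assms(1) sto] assms(2) by blast
qed

end
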